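(* Let $F_0(x)=\frac{1}{1+x}$, $G_0(x)=\frac{x}{1+x}$, $H_0(x)=\frac{x(x+2)}{2(x+1)}$, and for $n\ge1$ let $F_n,G_n,H_n$ be the polynomials defined by $F_1=G_1=H_1=1$ and \[F_{n+1}(x)=(2n+2+(n+2)x)F_n(x)+(1+x)^2F_n'(x),\quad G_{n+1}(x)=(2n+nx)G_n(x)+(1+x)^2G_n'(x),\] \[H_{n+1}(x)=(2n-1+(n-1)x)H_n(x)+(1+x)^2H_n'(x).\] Writing $w=\frac{u+x}{1+x}e^{-\frac{x}{1+x}}$, we have \[\sum_{n\ge0}\frac{u^n}{n!}F_n(x)=\frac{1}{(1+x)^2}T_0(w),\qquad \sum_{n\ge0}\frac{u^n}{n!}G_n(x)=T(w),\qquad \sum_{n\ge0}\frac{u^n}{n!}H_n(x)=(1+x)T_2(w).\]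
   Context: $T(z)=\sum_{n\ge1}n^{n-1}z^n/n!$ (tree function, $T=ze^{T}$), $T_0(z)=\frac{1}{1-T(z)}=1+\sum_{n\ge1}n^nz^n/n!$, and $T_2(z)=\sum_{n\ge1}n^{n-2}z^n/n!=T(z)-\tfrac12T(z)^2$. The identities are of formal power series in $u$ and $x$ (rational functions of $x$ expanded around $x=0$; $w$ has zero constant term). *)

theory Defs
  imports "HOL-Computational_Algebra.Computational_Algebra"
begin

(* Bivariate formal power series in u and x are modelled as  real fps fps :
   the outer variable is u, the coefficients are power series in x. *)

(* tree function T, T_0 = 1/(1-T), T_2, as univariate series by their coefficients *)
definition Tfps :: "real fps" where
  "Tfps = Abs_fps (\<lambda>n. if n = 0 then 0 else real n ^ (n - 1) / fact n)"
definition T0fps :: "real fps" where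
  "T0fps = Abs_fps (\<lambda>n. real n ^ n / fact n)"
definition T2fps :: "real fps" where
  "T2fps = Abs_fps (\<lambda>n. if n = 0 then 0 else real n powr (real n - 2) / fact n)"

(* substitution f(w) of a bivariate series w with zero constant term into a univariate series f:
   coefficient of u^i x^j is the finite sum over k <= i+j (w^k has no terms of total degree < k) *)
definition bsubst :: "real fps \<Rightarrow> real fps fps \<Rightarrow> real fps fps" where
  "bsubst f w = Abs_fps (\<lambda>i. Abs_fps (\<lambda>j.
      \<Sum>k\<le>i+j. fps_nth f k * fps_nth (fps_nth (w ^ k) i) j))"

definition uvar :: "real fps fps" where "uvar = fps_X"
definition xvar :: "real fps fps" where "xvar = fps_const fps_X"

definition wser :: "real fps fps" where
  "wser = (uvar + xvar) * fps_const (inverse (1 + fps_X)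
            * fps_compose (fps_exp 1) (- fps_X * inverse (1 + fps_X)))"

(* polynomials F_n, G_n, H_n for n >= 1 (value at 0 is a dummy) *)
fun Fp :: "nat \<Rightarrow> real poly" where
  "Fp 0 = 0"
| "Fp (Suc 0) = 1"
| "Fp (Suc (Suc m)) = (let n = Suc m in
     [: 2 * real n + 2, real n + 2 :] * Fp n + [:1, 1:] ^ 2 * pderiv (Fp n))"

fun Gp :: "nat \<Rightarrow> real poly" where
  "Gp 0 = 0"
| "Gp (Suc 0) = 1"
| "Gp (Suc (Suc m)) = (let n = Suc m in
     [: 2 * real n, real n :] * Gp n + [:1, 1:] ^ 2 * pderiv (Gp n))"

fun Hp :: "nat \<Rightarrow> real poly" where
  "Hp 0 = 0"
| "Hp (Suc 0) = 1"
| "Hp (Suc (Suc m)) = (let n = Suc m in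
     [: 2 * real n - 1, real n - 1 :] * Hp n + [:1, 1:] ^ 2 * pderiv (Hp n))"

definition Fx :: "nat \<Rightarrow> real fps" where
  "Fx n = (if n = 0 then inverse (1 + fps_X) else fps_of_poly (Fp n))"
definition Gx :: "nat \<Rightarrow> real fps" where
  "Gx n = (if n = 0 then fps_X * inverse (1 + fps_X) else fps_of_poly (Gp n))"
definition Hx :: "nat \<Rightarrow> real fps" where
  "Hx n = (if n = 0 then fps_X * (fps_X + 2) * inverse (2 * (fps_X + 1))
           else fps_of_poly (Hp n))"

definition egf :: "(nat \<Rightarrow> real fps) \<Rightarrow> real fps fps" where
  "egf A = Abs_fps (\<lambda>n. fps_const (1 / fact n) * A n)"

end

theory Submission
  imports Defs
begin

(*
  Put s = x/(1+x), c = e^(-s)/(1+x) and psi = x c, so that w = c u + psi. By Taylor's formula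
  the coefficient of u^n/n! in P(x) f(w) is P c^n f^(n)(psi). Since psi is x e^(-x) composed
  with s, Lagrange inversion T(x e^(-x)) = x gives T(psi) = s, hence T0(psi) = 1 + x and
  T2(psi) = s - s^2/2, which settles n = 0. Differentiating P c^n f^(n)(psi) shows that the
  terms for P = (1+x)^(-2), 1, 1+x obey the first-order recurrences defining F_n, G_n, H_n.
*)

lemma sum_alternating_binomial_power:
  "(\<Sum>m\<le>N. of_nat (N choose m) * (-1)^(N-m) * (real m + 1)^N) = fact N"
proof -
  define E where "E = fps_exp (1::real)"
  have "E - 1 = fps_X * fps_shift 1 (E - 1)"
    by (intro fps_ext) (auto simp: E_def)
  then have "(E * (E - 1)^N) $ N = (fps_X^N * (E * fps_shift 1 (E - 1)^N)) $ N"
    by (metis mult.left_commute power_mult_distrib)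
  also have "\<dots> = 1"
    by (simp add: fps_X_power_mult_nth E_def fps_power_zeroth)
  finally have lhs: "(E * (E - 1)^N) $ N = 1" .
  have "E * (E - 1)^N = E * (E + (-1))^N" by simp
  also have "\<dots>
      = (\<Sum>m\<le>N. fps_const (of_nat (N choose m) * (-1)^(N-m)) * fps_exp (real m + 1))"
    unfolding binomial_ring sum_distrib_left
  proof (intro sum.cong refl)
    fix m
    have "E * E^m = fps_exp (real m + 1)"
      by (simp add: E_def fps_exp_power_mult fps_exp_add_mult[symmetric] add.commute)
    moreover have "(-1::real fps)^k = fps_const ((-1)^k)" for k
      by (metis fps_const_neg fps_const_1_eq_1 fps_const_power)
    ultimately show "E * (of_nat (N choose m) * E^m * (-1)^(N-m))
        = fps_const (of_nat (N choose m) * (-1)^(N-m)) * fps_exp (real m + 1)"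
      by (simp only: fps_of_nat fps_const_mult[symmetric]) (simp add: algebra_simps)
  qed
  finally have "(E * (E - 1)^N) $ N
      = (\<Sum>m\<le>N. of_nat (N choose m) * (-1)^(N-m) * (real m + 1)^N) / fact N"
    by (simp add: fps_sum_nth sum_divide_distrib)
  with lhs show ?thesis by simp
qed

lemma fps_mult_compose_nth:
  fixes a f b :: "'a::comm_semiring_1 fps"
  assumes "b $ 0 = 0"
  shows "(a * (f oo b)) $ j = (\<Sum>m=0..j. f $ m * (a * b^m) $ j)"
proof -
  have vanish: "(b^m) $ n = 0" if "n < m" for m n
    using startsby_zero_power_prefix[OF assms, of m] that by blast
  have "(a * (f oo b)) $ j = (\<Sum>l=0..j. a$l * (\<Sum>m=0..j-l. f$m * (b^m)$(j-l)))"
    by (simp add: fps_mult_nth fps_compose_nth)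
  also have "\<dots> = (\<Sum>l=0..j. a$l * (\<Sum>m=0..j. f$m * (b^m)$(j-l)))"
    by (intro sum.cong refl arg_cong2[where f = "(*)"] sum.mono_neutral_left) (auto simp: vanish)
  also have "\<dots> = (\<Sum>m=0..j. f$m * (\<Sum>l=0..j. a$l * (b^m)$(j-l)))"
    unfolding sum_distrib_left by (subst sum.swap) (simp only: ac_simps)
  also have "\<dots> = (\<Sum>m=0..j. f $ m * (a * b^m) $ j)"
    by (simp add: fps_mult_nth)
  finally show ?thesis .
qed

lemma fps_nth_higher_deriv:
  "(fps_deriv ^^ i) (f :: 'a::field_char_0 fps) $ m = f $ (m + i) * fact (m + i) / fact m"
proof (induction i arbitrary: m)
  case (Suc i)
  have "(fps_deriv ^^ Suc i) f $ m = of_nat (Suc m) * ((fps_deriv ^^ i) f $ Suc m)"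
    by simp
  also have "\<dots> = of_nat (Suc m) * (f $ (Suc m + i) * fact (Suc m + i) / fact (Suc m))"
    by (simp only: Suc.IH)
  finally show ?case
    by (simp del: of_nat_Suc)
qed simp

lemma fps_nth_power_X_plus_const:
  "((fps_X + fps_const (a::'a::comm_ring_1))^k) $ i
     = (if i \<le> k then of_nat (k choose i) * a^(k-i) else 0)"
proof -
  have "(of_nat (k choose l) * fps_X^l * fps_const a^(k-l) :: 'a fps)
      = fps_const (of_nat (k choose l) * a^(k-l)) * fps_X^l" for l
    by (simp add: fps_of_nat[symmetric] ac_simps)
  then have "((fps_X + fps_const a)^k) $ i
      = (\<Sum>l\<le>k. (fps_const (of_nat (k choose l) * a^(k-l)) * fps_X^l) $ i)"
    unfolding binomial_ring by (simp add: fps_sum_nth)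
  also have "\<dots> = (\<Sum>l\<le>k. if i = l then of_nat (k choose l) * a^(k-l) else 0)"
    by (intro sum.cong refl) simp
  finally show ?thesis by simp
qed

lemma fps_const_half_mult_2: "fps_const (1/2) * 2 = (1 :: 'a::field_char_0 fps)"
  by (simp add: fps_const_mult[symmetric] flip: fps_numeral_fps_const)

lemma fps_eq_if_deriv_eq:
  fixes f g :: "'a::{idom,semiring_char_0} fps"
  assumes "fps_deriv f = fps_deriv g" and "f $ 0 = g $ 0"
  shows "f = g"
  using assms by (simp add: fps_deriv_eq_iff)

lemma Tfps_deriv_nth: "fps_deriv Tfps $ m = (real m + 1)^m / fact m"
proof -
  have "fps_deriv Tfps $ m = (real m + 1) * ((real m + 1)^m / ((real m + 1) * fact m))"
    by (simp add: Tfps_def add.commute)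
  then show ?thesis
    by (simp add: add_pos_nonneg)
qed

(* Lagrange inversion T(x e^(-x)) = x in derivative form: the N-th coefficient of the left-hand
   side is the N-th finite difference of (m + 1)^N, divided by N!. *)
lemma Tfps_deriv_compose_X_exp:
  "(fps_deriv Tfps oo (fps_X * fps_exp (-1))) * fps_exp (-1) = inverse (1 - fps_X)"
proof (intro fps_ext)
  fix N
  have "((fps_deriv Tfps oo (fps_X * fps_exp (-1))) * fps_exp (-1)) $ N
      = (\<Sum>m=0..N. fps_deriv Tfps $ m * (fps_exp (-1) * (fps_X * fps_exp (-1))^m) $ N)"
    by (subst mult.commute) (simp add: fps_mult_compose_nth)
  also have "\<dots> = (\<Sum>m\<le>N. of_nat (N choose m) * (-1)^(N-m) * (real m + 1)^N / fact N)"
    unfolding atLeast0AtMost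
  proof (intro sum.cong refl)
    fix m assume "m \<in> {..N}"
    then have m: "m \<le> N" by simp
    have "fps_exp (-1) * (fps_X * fps_exp (-1))^m = fps_X^m * fps_exp (-(real m + 1))"
      by (simp add: fps_exp_power_mult fps_exp_add_mult[symmetric] algebra_simps)
    then have "(fps_exp (-1) * (fps_X * fps_exp (-1))^m) $ N
        = (-(real m + 1))^(N-m) / fact (N-m)"
      using m by (simp add: fps_X_power_mult_nth)
    also have "(-(real m + 1))^(N-m) = (-1)^(N-m) * (real m + 1)^(N-m)"
      by (rule power_minus)
    finally have coeff: "(fps_exp (-1) * (fps_X * fps_exp (-1))^m) $ N
        = (-1)^(N-m) * (real m + 1)^(N-m) / fact (N-m)" .
    have pow: "(real m + 1)^N = (real m + 1)^m * (real m + 1)^(N-m)"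
      using m by (simp add: power_add[symmetric])
    have binom: "(of_nat (N choose m) :: real) = fact N / (fact m * fact (N-m))"
      using m by (rule binomial_fact)
    have "A / a * (s * B / b) = c / (a * b) * s * (A * B) / c"
      if "a \<noteq> 0" "b \<noteq> 0" "c \<noteq> 0" for A B a b c s :: real
      using that by (simp add: field_simps)
    then show "fps_deriv Tfps $ m * (fps_exp (-1) * (fps_X * fps_exp (-1))^m) $ N
        = of_nat (N choose m) * (-1)^(N-m) * (real m + 1)^N / fact N"
      unfolding Tfps_deriv_nth coeff pow binom by simp
  qed
  also have "\<dots> = 1"
    using sum_alternating_binomial_power[of N] by (simp add: sum_divide_distrib[symmetric])
  finally show "((fps_deriv Tfps oo (fps_X * fps_exp (-1))) * fps_exp (-1)) $ N
      = inverse (1 - fps_X) $ N"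
    by (simp add: fps_inverse_one_minus_fps_X)
qed

lemma Tfps_compose_X_exp: "Tfps oo (fps_X * fps_exp (-1)) = fps_X"
proof (rule fps_eq_if_deriv_eq)
  have "fps_deriv (Tfps oo (fps_X * fps_exp (-1)))
      = ((fps_deriv Tfps oo (fps_X * fps_exp (-1))) * fps_exp (-1)) * (1 - fps_X)"
    by (simp add: fps_compose_deriv algebra_simps fps_const_neg[symmetric])
  also have "\<dots> = 1"
    by (simp add: Tfps_deriv_compose_X_exp inverse_mult_eq_1)
  finally show "fps_deriv (Tfps oo (fps_X * fps_exp (-1))) = fps_deriv fps_X"
    by simp
qed (simp add: Tfps_def)

lemma T0fps_eq: "T0fps = 1 + fps_X * fps_deriv Tfps"
proof (intro fps_ext)
  fix n show "T0fps $ n = (1 + fps_X * fps_deriv Tfps) $ n"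
  proof (cases n)
    case (Suc m)
    have "(real m + 1)^(Suc m) / fact (Suc m) = (real m + 1)^m / fact m"
      by (simp add: add_pos_nonneg add.commute)
    then show ?thesis
      using Suc by (simp add: T0fps_def Tfps_deriv_nth add.commute del: fps_deriv_nth)
  qed (simp add: T0fps_def)
qed

lemma fps_X_mult_deriv_T2fps: "fps_X * fps_deriv T2fps = Tfps"
proof (intro fps_ext)
  fix n show "(fps_X * fps_deriv T2fps) $ n = Tfps $ n"
  proof (cases n)
    case (Suc m)
    have "real (Suc m) * real (Suc m) powr (real m - 1) = real (Suc m) ^ m"
      by (simp add: powr_diff powr_realpow del: of_nat_Suc)
    then have "real (Suc m) * (real (Suc m) powr (real (Suc m) - 2) / fact (Suc m))
        = real (Suc m) ^ m / fact (Suc m)"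
      by (simp add: diff_add_eq_diff_diff_swap)
    then show ?thesis
      using Suc by (simp add: T2fps_def Tfps_def del: of_nat_Suc)
  qed (simp add: Tfps_def)
qed

definition inv1X :: "real fps" where "inv1X = inverse (1 + fps_X)"
definition sfps :: "real fps" where "sfps = fps_X * inv1X"
definition cfps :: "real fps" where "cfps = inv1X * (fps_exp 1 oo - sfps)"
definition psi :: "real fps" where "psi = fps_X * cfps"

lemma one_plus_X_mult_inv1X: "(1 + fps_X) * inv1X = 1"
  unfolding inv1X_def by (rule inverse_mult_eq_1') simp

lemma fps_deriv_inv1X: "fps_deriv inv1X = - (inv1X^2)"
  unfolding inv1X_def by (subst fps_inverse_deriv) simp_all

lemma sfps_nth_0 [simp]: "sfps $ 0 = 0"
  by (simp add: sfps_def)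

lemma psi_nth_0 [simp]: "psi $ 0 = 0"
  by (simp add: psi_def)

(* Derivatives are stated through (1+x)^2 d/dx, the operator of the recurrences. *)
lemma fps_deriv_sfps: "(1 + fps_X)^2 * fps_deriv sfps = 1"
proof -
  have "(1 + fps_X)^2 * fps_deriv sfps = (1 + fps_X)^2 * (inv1X - fps_X * inv1X^2)"
    by (simp add: sfps_def fps_deriv_inv1X)
  also have "\<dots> = 1"
    using one_plus_X_mult_inv1X by algebra
  finally show ?thesis .
qed

lemma fps_deriv_cfps: "(1 + fps_X)^2 * fps_deriv cfps = - (2 + fps_X) * cfps"
proof -
  have "fps_deriv (fps_exp 1 oo - sfps) = - (fps_exp 1 oo - sfps) * fps_deriv sfps"
    by (simp add: fps_compose_deriv)
  then have "(1 + fps_X)^2 * fps_deriv cfps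
      = (1 + fps_X)^2 * (- (inv1X^2) * (fps_exp 1 oo - sfps)
          - inv1X * (fps_exp 1 oo - sfps) * fps_deriv sfps)"
    by (simp add: cfps_def fps_deriv_inv1X algebra_simps)
  also have "\<dots> = - (2 + fps_X) * cfps"
    unfolding cfps_def using one_plus_X_mult_inv1X fps_deriv_sfps by algebra
  finally show ?thesis .
qed

lemma fps_deriv_cfps_power:
  "(1 + fps_X)^2 * fps_deriv (cfps^n) = - of_nat n * (2 + fps_X) * cfps^n"
proof (cases n)
  case (Suc m)
  have "(1 + fps_X)^2 * fps_deriv (cfps^n)
      = of_nat n * cfps^m * ((1 + fps_X)^2 * fps_deriv cfps)"
    by (simp only: Suc fps_deriv_power' diff_Suc_1 ac_simps)
  also have "\<dots> = - of_nat n * (2 + fps_X) * cfps^n"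
    unfolding fps_deriv_cfps Suc power_Suc by algebra
  finally show ?thesis .
qed simp

lemma fps_deriv_psi: "(1 + fps_X)^2 * fps_deriv psi = cfps"
proof -
  have "(1 + fps_X)^2 * fps_deriv psi
      = (1 + fps_X)^2 * cfps + fps_X * ((1 + fps_X)^2 * fps_deriv cfps)"
    by (simp add: psi_def algebra_simps)
  also have "\<dots> = cfps"
    unfolding fps_deriv_cfps by (simp add: algebra_simps power2_eq_square)
  finally show ?thesis .
qed

lemma fps_deriv_compose_psi:
  "(1 + fps_X)^2 * fps_deriv (f oo psi) = (fps_deriv f oo psi) * cfps"
  by (simp add: fps_compose_deriv fps_deriv_psi[symmetric] ac_simps)

lemma psi_eq_compose: "psi = (fps_X * fps_exp (-1)) oo sfps"
proof -
  have "fps_exp (-1) oo sfps = fps_exp 1 oo ((- fps_X) oo sfps)"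
    by (subst fps_compose_assoc) simp_all
  also have "(- fps_X) oo sfps = - sfps"
    by (simp add: fps_compose_uminus)
  finally show ?thesis
    by (simp add: psi_def cfps_def sfps_def fps_compose_mult_distrib ac_simps)
qed

lemma Tfps_compose_psi: "Tfps oo psi = sfps"
proof -
  have "Tfps oo psi = (Tfps oo (fps_X * fps_exp (-1))) oo sfps"
    unfolding psi_eq_compose by (rule fps_compose_assoc) simp_all
  then show ?thesis
    by (simp add: Tfps_compose_X_exp)
qed

lemma Tfps_deriv_compose_psi: "(fps_deriv Tfps oo psi) * cfps = 1"
  using fps_deriv_compose_psi[of Tfps] by (simp add: Tfps_compose_psi fps_deriv_sfps)

lemma T0fps_compose_psi: "T0fps oo psi = 1 + fps_X"
proof -
  have "T0fps oo psi = 1 + fps_X * ((fps_deriv Tfps oo psi) * cfps)"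
    by (simp add: T0fps_eq fps_compose_add_distrib fps_compose_mult_distrib psi_def ac_simps)
  then show ?thesis
    by (simp add: Tfps_deriv_compose_psi)
qed

lemma T2fps_compose_psi: "T2fps oo psi = sfps - fps_const (1/2) * sfps^2"
proof (rule fps_eq_if_deriv_eq)
  have "psi * (fps_deriv T2fps oo psi) = sfps"
    using arg_cong[OF fps_X_mult_deriv_T2fps, of "\<lambda>f. f oo psi"]
    by (simp add: fps_compose_mult_distrib Tfps_compose_psi)
  then have "fps_X * (cfps * (fps_deriv T2fps oo psi)) = fps_X * inv1X"
    by (simp add: psi_def sfps_def ac_simps)
  then have "(fps_deriv T2fps oo psi) * cfps = inv1X"
    by (simp add: ac_simps)
  moreover have "(1 + fps_X)^2 * fps_deriv (sfps - fps_const (1/2) * sfps^2) = inv1X"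
  proof -
    have "(1 + fps_X)^2 * fps_deriv (sfps - fps_const (1/2) * sfps^2)
        = (1 - fps_const (1/2) * 2 * sfps) * ((1 + fps_X)^2 * fps_deriv sfps)"
      by (simp add: power2_eq_square algebra_simps)
    also have "\<dots> = 1 - sfps"
      by (simp add: fps_deriv_sfps fps_const_half_mult_2)
    also have "\<dots> = inv1X"
      using one_plus_X_mult_inv1X by (simp add: sfps_def algebra_simps)
    finally show ?thesis .
  qed
  ultimately have "(1 + fps_X)^2 * fps_deriv (T2fps oo psi)
      = (1 + fps_X)^2 * fps_deriv (sfps - fps_const (1/2) * sfps^2)"
    by (simp add: fps_deriv_compose_psi)
  then show "fps_deriv (T2fps oo psi) = fps_deriv (sfps - fps_const (1/2) * sfps^2)"
    by simp
qed (simp add: T2fps_def)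

lemma bsubst_nth: "bsubst f w $ i $ j = (\<Sum>k\<le>i+j. f $ k * (w^k) $ i $ j)"
  by (simp add: bsubst_def)

lemma bsubst_Taylor:
  assumes "a $ 0 = 0"
  shows "bsubst f ((fps_X + fps_const a) * fps_const c) $ i
           = fps_const (1 / fact i) * c^i * ((fps_deriv ^^ i) f oo (a * c))"
proof (intro fps_ext)
  fix j
  have "((fps_X + fps_const a) * fps_const c)^k = (fps_X + fps_const a)^k * fps_const (c^k)" for k
    by (simp add: power_mult_distrib)
  then have power_nth: "(((fps_X + fps_const a) * fps_const c)^k) $ i
      = (if i \<le> k then of_nat (k choose i) * (a^(k-i) * c^k) else 0)" for k
    by (simp only: fps_mult_right_const_nth fps_nth_power_X_plus_const) simp
  define g where "g k = f $ k * (of_nat (k choose i) * (a^(k-i) * c^k)) $ j" for k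
  have "bsubst f ((fps_X + fps_const a) * fps_const c) $ i $ j
      = (\<Sum>k\<le>i+j. if i \<le> k then g k else 0)"
    unfolding bsubst_nth g_def
    by (intro sum.cong refl) (simp add: power_nth)
  also have "\<dots> = sum g {k \<in> {..i+j}. i \<le> k}"
    by (rule sum.inter_filter[symmetric]) simp
  also have "{k \<in> {..i+j}. i \<le> k} = {i..i+j}"
    by auto
  also have "sum g {i..i+j} = (\<Sum>m=0..j. g (m + i))"
    using sum.shift_bounds_cl_nat_ivl[of g 0 i j] by (simp add: add.commute)
  also have "\<dots>
      = (\<Sum>m=0..j. 1 / fact i * ((fps_deriv ^^ i) f $ m * (c^i * (a * c)^m) $ j))"
  proof (intro sum.cong refl)
    fix m
    have "(of_nat ((m+i) choose i) :: real) = fact (m+i) / (fact i * fact m)"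
      using binomial_fact[of i "m+i"] by simp
    then have "g (m + i)
        = f $ (m+i) * (fact (m+i) / (fact i * fact m)) * (a^m * c^(m+i)) $ j"
      by (simp add: g_def fps_of_nat[symmetric] mult.assoc del: of_nat_add)
    also have "\<dots>
        = 1 / fact i * ((f $ (m+i) * fact (m+i) / fact m) * (c^i * (a * c)^m) $ j)"
      by (simp add: power_add field_simps)
    finally show "g (m + i) = 1 / fact i * ((fps_deriv ^^ i) f $ m * (c^i * (a * c)^m) $ j)"
      by (simp only: fps_nth_higher_deriv)
  qed
  also have "\<dots> = (fps_const (1 / fact i) * c^i * ((fps_deriv ^^ i) f oo (a * c))) $ j"
    using assms by (simp add: fps_mult_compose_nth sum_distrib_left mult.assoc)
  finally show "bsubst f ((fps_X + fps_const a) * fps_const c) $ i $ j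
      = (fps_const (1 / fact i) * c^i * ((fps_deriv ^^ i) f oo (a * c))) $ j" .
qed

lemma wser_eq: "wser = (fps_X + fps_const fps_X) * fps_const cfps"
  by (simp add: wser_def uvar_def xvar_def cfps_def sfps_def inv1X_def)

definition rec_step :: "real fps \<Rightarrow> nat \<Rightarrow> real fps \<Rightarrow> real fps" where
  "rec_step q n y = (of_nat n * (2 + fps_X) - q) * y + (1 + fps_X)^2 * fps_deriv y"

definition taylor_term :: "real fps \<Rightarrow> real fps \<Rightarrow> nat \<Rightarrow> real fps" where
  "taylor_term P f n = P * cfps^n * ((fps_deriv ^^ n) f oo psi)"

lemma egf_taylor_term: "egf (taylor_term P f) = fps_const P * bsubst f wser"
proof (rule fps_ext)
  fix n
  have "bsubst f wser $ n = fps_const (1 / fact n) * cfps^n * ((fps_deriv ^^ n) f oo psi)"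
    unfolding wser_eq psi_def by (rule bsubst_Taylor) simp
  then show "egf (taylor_term P f) $ n = (fps_const P * bsubst f wser) $ n"
    by (simp add: egf_def taylor_term_def ac_simps)
qed

lemma taylor_term_Suc:
  assumes "(1 + fps_X)^2 * fps_deriv P = q * P"
  shows "taylor_term P f (Suc n) = rec_step q n (taylor_term P f n)"
proof -
  define C where "C = cfps^n"
  define a where "a = (fps_deriv ^^ n) f oo psi"
  have "(1 + fps_X)^2 * fps_deriv (P * C * a)
      = ((1 + fps_X)^2 * fps_deriv P) * C * a + P * ((1 + fps_X)^2 * fps_deriv C) * a
        + P * C * ((1 + fps_X)^2 * fps_deriv a)"
    by (simp add: algebra_simps)
  also have "\<dots> = q * P * C * a - of_nat n * (2 + fps_X) * P * C * a + taylor_term P f (Suc n)"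
    unfolding assms C_def a_def fps_deriv_cfps_power fps_deriv_compose_psi
    by (simp add: taylor_term_def ac_simps)
  finally show ?thesis
    by (simp add: rec_step_def taylor_term_def C_def[symmetric] a_def[symmetric] algebra_simps)
qed

lemma fps_of_poly_linear_step:
  "fps_of_poly ([:a, b:] * p + [:1, 1:]^2 * pderiv p)
     = (fps_const a + fps_const b * fps_X) * fps_of_poly p
       + (1 + fps_X)^2 * fps_deriv (fps_of_poly p)"
  by (simp add: fps_of_poly_simps algebra_simps)

lemma Fx_Suc: "Fx (Suc n) = rec_step (- 2 * (1 + fps_X)) n (Fx n)"
proof (cases n)
  case 0
  have "rec_step (- 2 * (1 + fps_X)) 0 inv1X
      = 2 * ((1 + fps_X) * inv1X) - ((1 + fps_X) * inv1X)^2"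
    by (simp add: rec_step_def fps_deriv_inv1X algebra_simps power2_eq_square)
  then show ?thesis
    using 0 by (simp add: Fx_def one_plus_X_mult_inv1X flip: inv1X_def)
next
  case (Suc m)
  then have "Fx (Suc n)
      = fps_of_poly ([: 2 * real n + 2, real n + 2 :] * Fp n + [:1, 1:]^2 * pderiv (Fp n))"
    by (simp add: Fx_def)
  also have "\<dots> = (fps_const (2 * real n + 2) + fps_const (real n + 2) * fps_X) * Fx n
      + (1 + fps_X)^2 * fps_deriv (Fx n)"
    using Suc by (simp only: fps_of_poly_linear_step Fx_def) simp
  also have "fps_const (2 * real n + 2) + fps_const (real n + 2) * fps_X
      = of_nat n * (2 + fps_X) - (- 2 * (1 + fps_X))"
    by (simp add: fps_of_nat[symmetric] fps_numeral_fps_const algebra_simps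
             flip: fps_const_add fps_const_mult)
  finally show ?thesis
    unfolding rec_step_def .
qed

lemma Gx_Suc: "Gx (Suc n) = rec_step 0 n (Gx n)"
proof (cases n)
  case 0
  have "Gx 0 = sfps"
    by (simp add: Gx_def sfps_def inv1X_def)
  then show ?thesis
    using 0 by (simp add: Gx_def rec_step_def fps_deriv_sfps)
next
  case (Suc m)
  then have "Gx (Suc n)
      = fps_of_poly ([: 2 * real n, real n :] * Gp n + [:1, 1:]^2 * pderiv (Gp n))"
    by (simp add: Gx_def)
  also have "\<dots> = (fps_const (2 * real n) + fps_const (real n) * fps_X) * Gx n
      + (1 + fps_X)^2 * fps_deriv (Gx n)"
    using Suc by (simp only: fps_of_poly_linear_step Gx_def) simp
  also have "fps_const (2 * real n) + fps_const (real n) * fps_X = of_nat n * (2 + fps_X) - 0"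
    by (simp add: fps_of_nat[symmetric] fps_numeral_fps_const algebra_simps
             flip: fps_const_add fps_const_mult)
  finally show ?thesis
    unfolding rec_step_def .
qed

lemma Hx_0: "Hx 0 = fps_const (1/2) * (fps_X * (fps_X + 2) * inv1X)"
proof -
  have "inverse (2 * (fps_X + 1)) = inverse (2::real fps) * inverse (fps_X + 1)"
    by (rule fps_inverse_mult)
  then show ?thesis
    by (simp add: Hx_def inverse_fps_numeral inv1X_def ac_simps)
qed

lemma Hx_Suc: "Hx (Suc n) = rec_step (1 + fps_X) n (Hx n)"
proof (cases n)
  case 0
  have "rec_step (1 + fps_X) 0 (Hx 0)
      = - (1 + fps_X) * (fps_const (1/2) * (fps_X * (fps_X + 2) * inv1X))
        + (1 + fps_X)^2
          * (fps_const (1/2) * ((2 * fps_X + 2) * inv1X - fps_X * (fps_X + 2) * inv1X^2))"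
    by (simp add: rec_step_def Hx_0 fps_deriv_inv1X algebra_simps)
  also have "\<dots> = 1"
    using one_plus_X_mult_inv1X fps_const_half_mult_2[where 'a = real] by algebra
  finally show ?thesis
    using 0 by (simp add: Hx_def)
next
  case (Suc m)
  then have "Hx (Suc n)
      = fps_of_poly ([: 2 * real n - 1, real n - 1 :] * Hp n + [:1, 1:]^2 * pderiv (Hp n))"
    by (simp add: Hx_def)
  also have "\<dots> = (fps_const (2 * real n - 1) + fps_const (real n - 1) * fps_X) * Hx n
      + (1 + fps_X)^2 * fps_deriv (Hx n)"
    using Suc by (simp only: fps_of_poly_linear_step Hx_def) simp
  also have "fps_const (2 * real n - 1) + fps_const (real n - 1) * fps_X
      = of_nat n * (2 + fps_X) - (1 + fps_X)"
    by (simp add: fps_of_nat[symmetric] fps_numeral_fps_const algebra_simps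
             flip: fps_const_add fps_const_mult)
  finally show ?thesis
    unfolding rec_step_def .
qed

lemma Fx_eq_taylor_term: "Fx = taylor_term (inv1X^2) T0fps"
proof
  fix n show "Fx n = taylor_term (inv1X^2) T0fps n"
  proof (induction n)
    case 0
    have "inv1X^2 * (1 + fps_X) = inv1X"
      using one_plus_X_mult_inv1X by algebra
    then show ?case
      by (simp add: Fx_def taylor_term_def T0fps_compose_psi inv1X_def)
  next
    case (Suc n)
    have "(1 + fps_X)^2 * fps_deriv (inv1X^2) = - 2 * (1 + fps_X) * inv1X^2"
      using one_plus_X_mult_inv1X
      by (simp add: power2_eq_square fps_deriv_inv1X) algebra
    then show ?case
      unfolding Fx_Suc Suc.IH by (rule taylor_term_Suc[symmetric])
  qed
qed

lemma Gx_eq_taylor_term: "Gx = taylor_term 1 Tfps"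
proof
  fix n show "Gx n = taylor_term 1 Tfps n"
  proof (induction n)
    case 0
    then show ?case
      by (simp add: Gx_def taylor_term_def Tfps_compose_psi sfps_def inv1X_def)
  next
    case (Suc n)
    have "(1 + fps_X)^2 * fps_deriv 1 = 0 * (1::real fps)"
      by simp
    then show ?case
      unfolding Gx_Suc Suc.IH by (rule taylor_term_Suc[symmetric])
  qed
qed

lemma Hx_eq_taylor_term: "Hx = taylor_term (1 + fps_X) T2fps"
proof
  fix n show "Hx n = taylor_term (1 + fps_X) T2fps n"
  proof (induction n)
    case 0
    have "fps_const (1/2) * (fps_X * (fps_X + 2) * inv1X)
        = (1 + fps_X) * (fps_X * inv1X - fps_const (1/2) * (fps_X * inv1X)^2)"
      using one_plus_X_mult_inv1X fps_const_half_mult_2[where 'a = real] by algebra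
    then show ?case
      by (simp add: Hx_0 taylor_term_def T2fps_compose_psi sfps_def)
  next
    case (Suc n)
    have "(1 + fps_X)^2 * fps_deriv (1 + fps_X) = (1 + fps_X) * (1 + fps_X :: real fps)"
      by (simp add: power2_eq_square)
    then show ?case
      unfolding Hx_Suc Suc.IH by (rule taylor_term_Suc[symmetric])
  qed
qed

theorem mainTheorem6:
  shows "egf Fx = fps_const (inverse ((1 + fps_X) ^ 2)) * bsubst T0fps wser
       \<and> egf Gx = bsubst Tfps wser
       \<and> egf Hx = fps_const (1 + fps_X) * bsubst T2fps wser"
proof (intro conjI)
  show "egf Fx = fps_const (inverse ((1 + fps_X) ^ 2)) * bsubst T0fps wser"
    by (simp add: Fx_eq_taylor_term egf_taylor_term inv1X_def fps_inverse_power)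
  show "egf Gx = bsubst Tfps wser"
    by (simp add: Gx_eq_taylor_term egf_taylor_term)
  show "egf Hx = fps_const (1 + fps_X) * bsubst T2fps wser"
    by (simp add: Hx_eq_taylor_term egf_taylor_term)
qed

end
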